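(* Let $q\ge2$ be an integer and $\eta\in(0,1-1/q]$. Suppose $\mathcal{C}\subseteq[q]^n$ is a code such that for every $c\in\mathcal{C}$ there are at most $A$ codewords $c'\in\mathcal{C}$ (including $c$ itself) with $\delta(c,c')<\eta$. Then for every integer $L\ge2$, $\mathcal{C}$ is $(J_q(\eta-\eta/L),\,AL-1)$-list decodable.
   Context: $[q]=\{0,1,\dots,q-1\}$. For $x,y\in[q]^n$, $\delta(x,y)$ is the fraction of coordinates $i$ with $x_i\ne y_i$. A code $\mathcal{C}\subseteq[q]^n$ is $(\rho,\ell)$-list decodable if for every $y\in[q]^n$ the number of $c\in\mathcal{C}$ with $\delta(c,y)<\rho$ is at most $\ell$. The Johnson radius function is $J_q(x)=\frac{q-1}{q}\Big(1-\sqrt{1-\frac{qx}{q-1}}\Big)$ for $x\in[0,1-1/q]$. *)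

theory Defs
  imports Complex_Main "HOL-Library.FuncSet"
begin

text \<open>The ambient space [q]^n: words indexed by {0..<n} with letters in {0..<q},
  represented as extensional functions.\<close>
definition words :: "nat \<Rightarrow> nat \<Rightarrow> (nat \<Rightarrow> nat) set" where
  "words q n = {..<n} \<rightarrow>\<^sub>E {..<q}"

definition rel_dist :: "nat \<Rightarrow> (nat \<Rightarrow> nat) \<Rightarrow> (nat \<Rightarrow> nat) \<Rightarrow> real" where
  "rel_dist n x y = real (card {i \<in> {..<n}. x i \<noteq> y i}) / real n"

definition johnson :: "nat \<Rightarrow> real \<Rightarrow> real" where
  "johnson q x = (real q - 1) / real q * (1 - sqrt (1 - real q * x / (real q - 1)))"

definition list_decodable ::
  "nat \<Rightarrow> nat \<Rightarrow> (nat \<Rightarrow> nat) set \<Rightarrow> real \<Rightarrow> nat \<Rightarrow> bool" where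
  "list_decodable q n C \<rho> l \<longleftrightarrow>
     (\<forall>y \<in> words q n. card {c \<in> C. rel_dist n c y < \<rho>} \<le> l)"

end

theory Submission
  imports Defs "HOL-Analysis.Convex"
begin

text \<open>If a ball of radius \<open>\<rho> = J\<^sub>q(\<eta> - \<eta>/L)\<close> around \<open>y\<close> contained \<open>A L\<close> codewords,
  greedily discarding \<open>\<eta>\<close>-neighbourhoods (each of size at most \<open>A\<close>) would leave \<open>L\<close> of them
  pairwise \<open>\<eta>\<close>-far. Counting the ordered pairs of this family that agree in a coordinate, from
  above through the pairwise distances and from below through Cauchy-Schwarz against the letters
  of \<open>y\<close>, gives \<open>\<eta>(1 - 1/L) \<le> 2e - q/(q-1) e\<^sup>2\<close> for the average distance \<open>e < \<rho>\<close> to \<open>y\<close>. But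
  \<open>\<rho>\<close> is the smaller root of \<open>2\<rho> - q/(q-1) \<rho>\<^sup>2 = \<eta>(1 - 1/L)\<close>, below which the left side is
  strictly increasing.\<close>

lemma bounded_degree_independent_subset:
  fixes P :: "'a \<Rightarrow> 'a \<Rightarrow> bool"
  assumes "finite S" and degree: "\<And>x. x \<in> S \<Longrightarrow> card {y \<in> S. P x y} \<le> A"
    and refl: "\<And>x. P x x" and sym: "\<And>x y. P x y \<Longrightarrow> P y x"
    and "A * m \<le> card S" and "A \<ge> 1"
  shows "\<exists>T \<subseteq> S. card T = m \<and> (\<forall>x\<in>T. \<forall>y\<in>T. x \<noteq> y \<longrightarrow> \<not> P x y)"
  using assms(1,2,5)
proof (induction m arbitrary: S)
  case 0
  show ?case by (intro exI[of _ "{}"]) auto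
next
  case (Suc m)
  have "S \<noteq> {}" using Suc.prems(3) \<open>A \<ge> 1\<close> by auto
  then obtain x where x: "x \<in> S" by blast
  define S' where "S' = S - {y \<in> S. P x y}"
  have "finite S'" using Suc.prems(1) by (simp add: S'_def)
  have "card S' = card S - card {y \<in> S. P x y}"
    unfolding S'_def using Suc.prems(1) by (intro card_Diff_subset) auto
  with Suc.prems(2)[OF x] Suc.prems(3) have "A * m \<le> card S'" by simp
  moreover have "card {y \<in> S'. P z y} \<le> A" if "z \<in> S'" for z
  proof -
    have "card {y \<in> S'. P z y} \<le> card {y \<in> S. P z y}"
      using Suc.prems(1) by (intro card_mono) (auto simp: S'_def)
    with Suc.prems(2) that show ?thesis by (force simp: S'_def)
  qed
  ultimately obtain T where T: "T \<subseteq> S'" "card T = m" "\<forall>u\<in>T. \<forall>v\<in>T. u \<noteq> v \<longrightarrow> \<not> P u v"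
    using Suc.IH[OF \<open>finite S'\<close>] by blast
  have "x \<notin> T" using T(1) refl by (auto simp: S'_def)
  moreover have "finite T" using T(1) \<open>finite S'\<close> finite_subset by blast
  ultimately show ?case
    using T x sym by (intro exI[of _ "insert x T"]) (auto simp: S'_def)
qed

definition hamming_dist :: "nat \<Rightarrow> (nat \<Rightarrow> nat) \<Rightarrow> (nat \<Rightarrow> nat) \<Rightarrow> nat" where
  "hamming_dist n x y = card {i \<in> {..<n}. x i \<noteq> y i}"

lemma rel_dist_eq_hamming_dist: "rel_dist n x y = real (hamming_dist n x y) / real n"
  by (simp add: rel_dist_def hamming_dist_def)

lemma hamming_dist_eq_sum: "real (hamming_dist n x y) = (\<Sum>k<n. of_bool (x k \<noteq> y k))"
  by (simp add: hamming_dist_def Int_def conj_commute)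

lemma agreements_eq_sum: "(\<Sum>k<n. of_bool (x k = y k)) = real n - real (hamming_dist n x y)"
proof -
  have "(\<Sum>k<n. of_bool (x k = y k)) = (\<Sum>k<n. 1 - of_bool (x k \<noteq> y k) :: real)"
    by (intro sum.cong) auto
  then show ?thesis by (simp add: sum_subtractf hamming_dist_eq_sum)
qed

lemma rel_dist_commute: "rel_dist n x y = rel_dist n y x"
  unfolding rel_dist_def by (simp add: eq_commute)

lemma rel_dist_self [simp]: "rel_dist n x x = 0"
  by (simp add: rel_dist_def)

lemma sum_collisions_eq_sum_fibre_squares:
  fixes f :: "'a \<Rightarrow> 'b"
  assumes "finite B" and "f ` T \<subseteq> B"
  shows "(\<Sum>i\<in>T. \<Sum>j\<in>T. of_bool (f i = f j) :: real) = (\<Sum>b\<in>B. (\<Sum>j\<in>T. of_bool (f j = b))\<^sup>2)"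
proof -
  have "(\<Sum>b\<in>B. (\<Sum>j\<in>T. of_bool (f j = b))\<^sup>2)
      = (\<Sum>b\<in>B. \<Sum>i\<in>T. \<Sum>j\<in>T. of_bool (f i = b) * of_bool (f j = b) :: real)"
    by (simp only: power2_eq_square sum_product)
  also have "\<dots> = (\<Sum>i\<in>T. \<Sum>b\<in>B. \<Sum>j\<in>T. of_bool (f i = b) * of_bool (f j = b))"
    by (rule sum.swap)
  also have "\<dots> = (\<Sum>i\<in>T. \<Sum>j\<in>T. \<Sum>b\<in>B. of_bool (f i = b) * of_bool (f j = b))"
    by (intro sum.cong refl) (rule sum.swap)
  also have "\<dots> = (\<Sum>i\<in>T. \<Sum>j\<in>T. of_bool (f i = f j))"
  proof (intro sum.cong refl)
    fix i j assume "i \<in> T"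
    then have "f i \<in> B" using assms(2) by blast
    have "(\<Sum>b\<in>B. of_bool (f i = b) * of_bool (f j = b))
        = (\<Sum>b\<in>B. if b = f i then of_bool (f j = f i) else 0 :: real)"
      by (intro sum.cong) auto
    also have "\<dots> = of_bool (f i = f j)"
      using assms(1) \<open>f i \<in> B\<close> by auto
    finally show "(\<Sum>b\<in>B. of_bool (f i = b) * of_bool (f j = b)) = (of_bool (f i = f j) :: real)" .
  qed
  finally show ?thesis by (rule sym)
qed

lemma sum_collisions_lower_bound:
  fixes f :: "'a \<Rightarrow> 'b"
  assumes "finite T" "finite B" "f ` T \<subseteq> B" "b \<in> B" "card B \<ge> 2"
  defines "t \<equiv> (\<Sum>j\<in>T. of_bool (f j \<noteq> b)) :: real"
  shows "(real (card T) - t)\<^sup>2 + t\<^sup>2 / (real (card B) - 1) \<le> (\<Sum>i\<in>T. \<Sum>j\<in>T. of_bool (f i = f j))"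
proof -
  define fibre where "fibre a = (\<Sum>j\<in>T. of_bool (f j = a) :: real)" for a
  have "(\<Sum>a\<in>B. fibre a) = (\<Sum>j\<in>T. \<Sum>a\<in>B. of_bool (f j = a))"
    unfolding fibre_def by (rule sum.swap)
  also have "\<dots> = real (card T)"
    using assms(2,3) by (simp add: of_bool_def sum.delta image_subset_iff eq_commute)
  finally have fibres_total: "(\<Sum>a\<in>B. fibre a) = real (card T)" .
  have fibre_b: "fibre b = real (card T) - t"
  proof -
    have "fibre b = (\<Sum>j\<in>T. 1 - of_bool (f j \<noteq> b))"
      unfolding fibre_def by (intro sum.cong) auto
    then show ?thesis by (simp add: sum_subtractf t_def)
  qed
  define R where "R = B - {b}"
  have "(\<Sum>a\<in>R. fibre a) = t"
    using fibres_total fibre_b assms(2,4) by (simp add: R_def sum.remove)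
  moreover have "(\<Sum>a\<in>R. fibre a)\<^sup>2 \<le> (\<Sum>a\<in>R. (fibre a)\<^sup>2) * (real (card B) - 1)"
    using sum_squared_le_sum_of_squares[of fibre R] assms(2,4,5) by (simp add: R_def of_nat_diff)
  moreover have "real (card B) - 1 > 0" using assms(5) by simp
  ultimately have "t\<^sup>2 / (real (card B) - 1) \<le> (\<Sum>a\<in>R. (fibre a)\<^sup>2)"
    by (simp add: divide_le_eq)
  moreover have "(\<Sum>i\<in>T. \<Sum>j\<in>T. of_bool (f i = f j)) = (fibre b)\<^sup>2 + (\<Sum>a\<in>R. (fibre a)\<^sup>2)"
    using sum_collisions_eq_sum_fibre_squares[OF assms(2,3)] assms(2,4)
    by (simp add: fibre_def R_def sum.remove)
  ultimately show ?thesis using fibre_b by simp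
qed

lemma sum_agreements_upper_bound:
  assumes "finite T" and far: "\<forall>u\<in>T. \<forall>v\<in>T. u \<noteq> v \<longrightarrow> D \<le> real (hamming_dist n u v)"
  shows "(\<Sum>k<n. \<Sum>i\<in>T. \<Sum>j\<in>T. of_bool (i k = j k))
           \<le> real (card T) * (real n + (real (card T) - 1) * (real n - D))"
proof -
  have "(\<Sum>k<n. \<Sum>i\<in>T. \<Sum>j\<in>T. of_bool (i k = j k))
      = (\<Sum>i\<in>T. \<Sum>j\<in>T. \<Sum>k<n. of_bool (i k = j k) :: real)"
    by (subst sum.swap) (intro sum.cong refl sum.swap)
  also have "\<dots> = (\<Sum>i\<in>T. \<Sum>j\<in>T. real n - real (hamming_dist n i j))"
    by (simp only: agreements_eq_sum)
  also have "\<dots> \<le> (\<Sum>i\<in>T. real n + (real (card T) - 1) * (real n - D))"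
  proof (rule sum_mono)
    fix i assume i: "i \<in> T"
    have "(\<Sum>j\<in>T - {i}. real n - real (hamming_dist n i j)) \<le> (\<Sum>j\<in>T - {i}. real n - D)"
      using far i by (intro sum_mono) auto
    moreover have "1 \<le> card T" using assms(1) i by (auto simp: Suc_le_eq card_gt_0_iff)
    ultimately show "(\<Sum>j\<in>T. real n - real (hamming_dist n i j)) \<le> real n + (real (card T) - 1) * (real n - D)"
      using assms(1) i by (simp add: sum.remove hamming_dist_def of_nat_diff)
  qed
  finally show ?thesis by simp
qed

lemma finite_words: "finite (words q n)"
  by (simp add: words_def finite_PiE)

lemma johnson_inequality:
  assumes "q \<ge> 2" and T: "T \<subseteq> words q n" and y: "y \<in> words q n"
    and far: "\<forall>u\<in>T. \<forall>v\<in>T. u \<noteq> v \<longrightarrow> D \<le> real (hamming_dist n u v)"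
  defines "L \<equiv> real (card T)" and "s \<equiv> (\<Sum>c\<in>T. real (hamming_dist n c y))"
  shows "L * (L - 1) * D * real n \<le> 2 * L * s * real n - real q / (real q - 1) * s\<^sup>2"
proof -
  define c where "c = real q / (real q - 1)"
  have "c > 0" using \<open>q \<ge> 2\<close> by (simp add: c_def)
  have "finite T" using T finite_subset finite_words by blast
  define t where "t k = (\<Sum>j\<in>T. of_bool (j k \<noteq> y k) :: real)" for k
  define U where "U = (\<Sum>k<n. (t k)\<^sup>2)"
  have s_eq: "s = (\<Sum>k<n. t k)"
    unfolding s_def t_def hamming_dist_eq_sum by (rule sum.swap)
  have per_letter: "(L - t k)\<^sup>2 + (t k)\<^sup>2 / (real q - 1) \<le> (\<Sum>i\<in>T. \<Sum>j\<in>T. of_bool (i k = j k))"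
    if "k < n" for k
  proof -
    have "(\<lambda>j. j k) ` T \<subseteq> {..<q}" "y k \<in> {..<q}"
      using T y that by (auto simp: words_def)
    from sum_collisions_lower_bound[OF \<open>finite T\<close> finite_lessThan this] \<open>q \<ge> 2\<close>
    show ?thesis by (simp add: L_def t_def)
  qed
  have per_letter_sum: "(L - t k)\<^sup>2 + (t k)\<^sup>2 / (real q - 1) = L\<^sup>2 - 2 * L * t k + c * (t k)\<^sup>2" for k
    using \<open>q \<ge> 2\<close> by (simp add: c_def field_simps power2_eq_square)
  have "real n * L\<^sup>2 - 2 * L * s + c * U = (\<Sum>k<n. (L - t k)\<^sup>2 + (t k)\<^sup>2 / (real q - 1))"
    by (simp add: per_letter_sum sum.distrib sum_subtractf sum_distrib_left s_eq U_def)
  also have "\<dots> \<le> (\<Sum>k<n. \<Sum>i\<in>T. \<Sum>j\<in>T. of_bool (i k = j k))"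
    by (rule sum_mono) (simp add: per_letter)
  also have "\<dots> \<le> L * (real n + (L - 1) * (real n - D))"
    unfolding L_def by (rule sum_agreements_upper_bound[OF \<open>finite T\<close> far])
  also have "\<dots> = real n * L\<^sup>2 - L * (L - 1) * D"
    by (simp add: power2_eq_square algebra_simps)
  finally have "L * (L - 1) * D \<le> 2 * L * s - c * U"
    by linarith
  then have "L * (L - 1) * D * real n \<le> (2 * L * s - c * U) * real n"
    by (rule mult_right_mono) simp
  moreover have "c * s\<^sup>2 \<le> c * (U * real n)"
    using sum_squared_le_sum_of_squares[of t "{..<n}"] \<open>c > 0\<close> by (simp add: s_eq U_def)
  ultimately show ?thesis
    by (simp add: c_def[symmetric] algebra_simps)
qed

lemma johnson_smaller_root:
  fixes x :: real
  assumes "q \<ge> 2" "0 \<le> x" "x \<le> 1 - 1 / real q"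
  defines "c \<equiv> real q / (real q - 1)"
  shows "0 \<le> johnson q x" and "c * johnson q x \<le> 1"
    and "2 * johnson q x - c * (johnson q x)\<^sup>2 = x"
proof -
  have q: "real q > 1" using assms(1) by simp
  define r where "r = sqrt (1 - real q * x / (real q - 1))"
  have "real q * x \<le> real q - 1"
    using assms(3) q by (simp add: field_simps)
  then have r0: "0 \<le> r" and r1: "r \<le> 1" and r2: "r\<^sup>2 = 1 - real q * x / (real q - 1)"
    using q assms(2) by (auto simp: r_def)
  have J: "johnson q x = (real q - 1) / real q * (1 - r)"
    by (simp add: johnson_def r_def)
  have cJ: "c * johnson q x = 1 - r"
    using q by (simp add: J c_def)
  show "0 \<le> johnson q x" using J r1 q by simp
  show "c * johnson q x \<le> 1" using cJ r0 by simp
  have "2 * johnson q x - c * (johnson q x)\<^sup>2 = johnson q x * (2 - c * johnson q x)"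
    by (simp add: power2_eq_square algebra_simps)
  also have "\<dots> = (real q - 1) / real q * (1 - r\<^sup>2)"
    unfolding cJ by (simp add: J power2_eq_square algebra_simps)
  also have "\<dots> = x" using q by (simp add: r2 field_simps)
  finally show "2 * johnson q x - c * (johnson q x)\<^sup>2 = x" .
qed

lemma quadratic_strict_mono:
  fixes c e r :: real
  assumes "0 \<le> e" "e < r" "0 < c" "c * r \<le> 1"
  shows "2 * e - c * e\<^sup>2 < 2 * r - c * r\<^sup>2"
proof -
  have "c * e < c * r" using assms(2,3) by simp
  then have "c * (r + e) < 2"
    using assms(4) by (simp add: distrib_left)
  then have "0 < (r - e) * (2 - c * (r + e))"
    using assms(2) by simp
  then show ?thesis by (simp add: power2_eq_square algebra_simps)
qed

lemma johnson_inequality_rel_dist: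
  assumes "q \<ge> 2" and T: "T \<subseteq> words q n" "T \<noteq> {}" and y: "y \<in> words q n" and "0 < n"
    and far: "\<forall>u\<in>T. \<forall>v\<in>T. u \<noteq> v \<longrightarrow> \<eta> \<le> rel_dist n u v"
  defines "e \<equiv> (\<Sum>c\<in>T. rel_dist n c y) / real (card T)"
  shows "\<eta> - \<eta> / real (card T) \<le> 2 * e - real q / (real q - 1) * e\<^sup>2"
proof -
  define L where "L = real (card T)"
  define c where "c = real q / (real q - 1)"
  define s where "s = (\<Sum>u\<in>T. real (hamming_dist n u y))"
  define M where "M = L * real n"
  have "finite T" using T(1) finite_subset finite_words by blast
  then have "L > 0" using T(2) by (simp add: L_def card_gt_0_iff)
  then have "M > 0" using \<open>0 < n\<close> by (simp add: M_def)
  have eM: "e * M = s"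
    using \<open>L > 0\<close> \<open>0 < n\<close>
    by (simp add: e_def M_def s_def L_def rel_dist_eq_hamming_dist sum_divide_distrib[symmetric])
  have "\<forall>u\<in>T. \<forall>v\<in>T. u \<noteq> v \<longrightarrow> \<eta> * real n \<le> real (hamming_dist n u v)"
    using far \<open>0 < n\<close> by (simp add: rel_dist_eq_hamming_dist pos_le_divide_eq)
  from johnson_inequality[OF assms(1) T(1) y this]
  have pairs: "L * (L - 1) * \<eta> * real n * real n \<le> 2 * L * s * real n - c * s\<^sup>2"
    by (simp add: L_def s_def c_def mult.assoc)
  have "(\<eta> - \<eta> / L) * M\<^sup>2 = L * (L - 1) * \<eta> * real n * real n"
    using \<open>L > 0\<close> by (simp add: M_def power2_eq_square field_simps)
  also have "\<dots> \<le> 2 * L * s * real n - c * s\<^sup>2" by (fact pairs)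
  also have "\<dots> = (2 * e - c * e\<^sup>2) * M\<^sup>2"
    unfolding eM[symmetric] by (simp add: M_def power2_eq_square algebra_simps)
  finally show ?thesis
    using \<open>M > 0\<close> by (simp add: L_def c_def)
qed

lemma pairwise_far_words_not_in_johnson_ball:
  fixes \<eta> :: real
  assumes "q \<ge> 2" "0 < \<eta>" "\<eta> \<le> 1 - 1 / real q"
    and T: "T \<subseteq> words q n" "card T = L" "L \<ge> 2" and y: "y \<in> words q n"
    and far: "\<forall>u\<in>T. \<forall>v\<in>T. u \<noteq> v \<longrightarrow> \<eta> \<le> rel_dist n u v"
  shows "\<exists>c\<in>T. johnson q (\<eta> - \<eta> / real L) \<le> rel_dist n c y"
proof (rule ccontr)
  define x where "x = \<eta> - \<eta> / real L"
  define e where "e = (\<Sum>c\<in>T. rel_dist n c y) / real L"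
  assume "\<not> ?thesis"
  then have close: "rel_dist n u y < johnson q x" if "u \<in> T" for u
    using that by (auto simp: x_def)
  have "finite T" using T(1) finite_subset finite_words by blast
  have "\<not> card T \<le> Suc 0" using T(2,3) by simp
  then obtain a b where ab: "a \<in> T" "b \<in> T" "a \<noteq> b"
    using card_le_Suc0_iff_eq[OF \<open>finite T\<close>] by blast
  have "0 < n"
    using far ab \<open>0 < \<eta>\<close> by (fastforce simp: rel_dist_def)
  have "T \<noteq> {}" using ab(1) by blast
  have "\<eta> / real L \<le> \<eta> / 1"
    using assms(2) T(3) by (intro divide_left_mono) auto
  moreover have "0 \<le> \<eta> / real L" using assms(2) by simp
  ultimately have x_bounds: "0 \<le> x" "x \<le> 1 - 1 / real q"
    using assms(3) by (auto simp: x_def)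
  from johnson_inequality_rel_dist[OF assms(1) T(1) \<open>T \<noteq> {}\<close> y \<open>0 < n\<close> far]
  have "x \<le> 2 * e - real q / (real q - 1) * e\<^sup>2"
    by (simp add: x_def e_def T(2))
  moreover have "(\<Sum>c\<in>T. rel_dist n c y) < (\<Sum>c\<in>T. johnson q x)"
    using close \<open>finite T\<close> \<open>T \<noteq> {}\<close> by (intro sum_strict_mono) auto
  then have "e < johnson q x"
    using T(2,3) by (simp add: e_def divide_less_eq mult.commute)
  moreover have "0 \<le> e"
    unfolding e_def rel_dist_def by (intro divide_nonneg_nonneg sum_nonneg) auto
  moreover have "0 < real q / (real q - 1)" using \<open>q \<ge> 2\<close> by simp
  ultimately show False
    using quadratic_strict_mono[of e "johnson q x" "real q / (real q - 1)"]
      johnson_smaller_root[OF \<open>q \<ge> 2\<close> x_bounds]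
    by simp
qed

lemma pairwise_far_subset:
  fixes \<eta> :: real
  assumes "finite C" "S \<subseteq> C" "0 < \<eta>"
    and sparse: "\<forall>c \<in> C. card {c' \<in> C. rel_dist n c c' < \<eta>} \<le> A"
    and "A * L - 1 < card S"
  shows "\<exists>T \<subseteq> S. card T = L \<and> (\<forall>u\<in>T. \<forall>v\<in>T. u \<noteq> v \<longrightarrow> \<eta> \<le> rel_dist n u v)"
proof -
  have "finite S" using assms(1,2) by (rule finite_subset[rotated])
  have ball_bound: "card {v \<in> S. rel_dist n u v < \<eta>} \<le> A" if "u \<in> S" for u
  proof -
    have "card {v \<in> S. rel_dist n u v < \<eta>} \<le> card {v \<in> C. rel_dist n u v < \<eta>}"
      using assms(1,2) by (intro card_mono) auto
    also have "\<dots> \<le> A" using sparse assms(2) that by blast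
    finally show ?thesis .
  qed
  have "A * L \<le> card S" and "S \<noteq> {}" using assms(5) by auto
  then obtain u where "u \<in> S" by blast
  then have "1 \<le> card {v \<in> S. rel_dist n u v < \<eta>}"
    using \<open>finite S\<close> \<open>0 < \<eta>\<close> by (auto simp: Suc_le_eq card_gt_0_iff)
  with ball_bound[OF \<open>u \<in> S\<close>] have "1 \<le> A" by linarith
  have refl: "rel_dist n u u < \<eta>" for u using \<open>0 < \<eta>\<close> by simp
  have sym: "rel_dist n v u < \<eta>" if "rel_dist n u v < \<eta>" for u v
    using that by (simp add: rel_dist_commute)
  show ?thesis
    using bounded_degree_independent_subset[OF \<open>finite S\<close> ball_bound refl sym \<open>A * L \<le> card S\<close> \<open>1 \<le> A\<close>]
    by (auto simp: not_less)
qed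

theorem lemma2p5:
  fixes q n A L :: nat and \<eta> :: real and C :: "(nat \<Rightarrow> nat) set"
  assumes "q \<ge> 2"
    and "0 < \<eta>" and "\<eta> \<le> 1 - 1 / real q"
    and "C \<subseteq> words q n"
    and "\<forall>c \<in> C. card {c' \<in> C. rel_dist n c c' < \<eta>} \<le> A"
    and "L \<ge> 2"
  shows "list_decodable q n C (johnson q (\<eta> - \<eta> / real L)) (A * L - 1)"
  unfolding list_decodable_def
proof
  fix y assume y: "y \<in> words q n"
  define S where "S = {c \<in> C. rel_dist n c y < johnson q (\<eta> - \<eta> / real L)}"
  have "finite C" using assms(4) finite_words by (rule finite_subset)
  have "S \<subseteq> C" by (auto simp: S_def)
  show "card S \<le> A * L - 1"
  proof (rule ccontr)
    assume "\<not> card S \<le> A * L - 1"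
    then obtain T where T: "T \<subseteq> S" "card T = L" "\<forall>u\<in>T. \<forall>v\<in>T. u \<noteq> v \<longrightarrow> \<eta> \<le> rel_dist n u v"
      using pairwise_far_subset[OF \<open>finite C\<close> \<open>S \<subseteq> C\<close> assms(2,5)] by (meson not_le)
    moreover have "T \<subseteq> words q n" using T(1) \<open>S \<subseteq> C\<close> assms(4) by blast
    ultimately obtain c where "c \<in> T" "johnson q (\<eta> - \<eta> / real L) \<le> rel_dist n c y"
      using pairwise_far_words_not_in_johnson_ball[OF assms(1-3) _ _ assms(6) y] by blast
    then show False using T(1) by (auto simp: S_def)
  qed
qed

end
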